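(* Let $\mathcal{S}=\{s_1,\dots,s_N\}$ be a finite state space, $\mathcal{A}$ a finite action space, $\gamma\in(0,1)$, and consider the real MDP $\langle\mathcal{S},\mathcal{A},\mathbb{P},R,\gamma\rangle$ and the DT MDP $\langle\mathcal{S},\mathcal{A},\mathbb{P}',R',\gamma\rangle$. Let $R_{\max}=\max_{i,j,a}|R(s_i,a)-R'(s_j,a)|$, let $d_0:\mathcal{S}\times\mathcal{S}\to[0,\frac{R_{\max}}{1-\gamma}]$ be the constant zero function, and for $n\ge1$ define $$d_n(s_i,s_j)=\max_a\Big\{|R(s_i,a)-R'(s_j,a)|+\gamma W_1\big(\mathbb{P}(\cdot|s_i,a),\mathbb{P}'(\cdot|s_j,a);d_{n-1}\big)\Big\}.$$ Then $d_n$ converges uniformly, as $n\to\infty$, to a map $\bar d:\mathcal{S}\times\mathcal{S}\to[0,\frac{R_{\max}}{1-\gamma}]$ which is a fixed point of the recursion, i.e. $\bar d(s_i,s_j)=\max_a\{|R(s_i,a)-R'(s_j,a)|+\gamma W_1(\mathbb{P}(\cdot|s_i,a),\mathbb{P}'(\cdot|s_j,a);\bar d)\}$ for all $i,j$, and for all $n$ and all $i,j$, $$\bar d(s_i,s_j)-d_n(s_i,s_j)\le\frac{\gamma^nR_{\max}}{1-\gamma}.$$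
   Context: $\mathbb{P}(\cdot|s,a),\mathbb{P}'(\cdot|s,a)$ are probability distributions on $\mathcal{S}$; $R,R':\mathcal{S}\times\mathcal{A}\to\mathbb{R}$. For probability distributions $P,Q$ on $\mathcal{S}$ and a cost $d:\mathcal{S}\times\mathcal{S}\to[0,\infty)$ (not required to vanish on the diagonal; first argument a state of the real MDP, second a state of the DT MDP), $W_1(P,Q;d)=\min_{\Lambda}\sum_{i,j}\lambda_{i,j}d(s_i,s_j)$, over nonnegative $N\times N$ matrices $\Lambda=(\lambda_{i,j})$ with row sums $\sum_j\lambda_{i,j}=P(s_i)$ and column sums $\sum_i\lambda_{i,j}=Q(s_j)$. *)

theory Defs
  imports "HOL-Analysis.Analysis"
begin

definition is_distr :: "('s::finite \<Rightarrow> real) \<Rightarrow> bool" where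
  "is_distr p \<longleftrightarrow> (\<forall>s. 0 \<le> p s) \<and> (\<Sum>s\<in>UNIV. p s) = 1"

definition couplings :: "('s::finite \<Rightarrow> real) \<Rightarrow> ('s \<Rightarrow> real) \<Rightarrow> ('s \<Rightarrow> 's \<Rightarrow> real) set" where
  "couplings P Q = {L. (\<forall>i j. 0 \<le> L i j) \<and> (\<forall>i. (\<Sum>j\<in>UNIV. L i j) = P i)
                        \<and> (\<forall>j. (\<Sum>i\<in>UNIV. L i j) = Q j)}"

text \<open>Wasserstein-1 (optimal transport) distance with cost d; the minimum over couplings
  (which is attained, so the infimum equals the minimum).\<close>
definition W1 :: "('s::finite \<Rightarrow> real) \<Rightarrow> ('s \<Rightarrow> real) \<Rightarrow> ('s \<Rightarrow> 's \<Rightarrow> real) \<Rightarrow> real" where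
  "W1 P Q d = Inf ((\<lambda>L. \<Sum>i\<in>UNIV. \<Sum>j\<in>UNIV. L i j * d i j) ` couplings P Q)"

definition bisim_step ::
  "('s::finite \<Rightarrow> 'a::finite \<Rightarrow> 's \<Rightarrow> real) \<Rightarrow> ('s \<Rightarrow> 'a \<Rightarrow> 's \<Rightarrow> real)
   \<Rightarrow> ('s \<Rightarrow> 'a \<Rightarrow> real) \<Rightarrow> ('s \<Rightarrow> 'a \<Rightarrow> real) \<Rightarrow> real
   \<Rightarrow> ('s \<Rightarrow> 's \<Rightarrow> real) \<Rightarrow> ('s \<Rightarrow> 's \<Rightarrow> real)" where
  "bisim_step P P' R R' \<gamma> d = (\<lambda>si sj. Max (range (\<lambda>a. \<bar>R si a - R' sj a\<bar>
        + \<gamma> * W1 (P si a) (P' sj a) d)))"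

primrec bisim_iter ::
  "('s::finite \<Rightarrow> 'a::finite \<Rightarrow> 's \<Rightarrow> real) \<Rightarrow> ('s \<Rightarrow> 'a \<Rightarrow> 's \<Rightarrow> real)
   \<Rightarrow> ('s \<Rightarrow> 'a \<Rightarrow> real) \<Rightarrow> ('s \<Rightarrow> 'a \<Rightarrow> real) \<Rightarrow> real \<Rightarrow> nat \<Rightarrow> ('s \<Rightarrow> 's \<Rightarrow> real)" where
  "bisim_iter P P' R R' \<gamma> 0 = (\<lambda>_ _. 0)"
| "bisim_iter P P' R R' \<gamma> (Suc n) = bisim_step P P' R R' \<gamma> (bisim_iter P P' R R' \<gamma> n)"

definition Rmax :: "('s::finite \<Rightarrow> 'a::finite \<Rightarrow> real) \<Rightarrow> ('s \<Rightarrow> 'a \<Rightarrow> real) \<Rightarrow> real" where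
  "Rmax R R' = Max {\<bar>R si a - R' sj a\<bar> | si sj a. True}"

end

theory Submission
  imports Defs
begin

(* Couplings are probability measures, so the optimal transport cost satisfies
   W1 P Q (d + c) = W1 P Q d + c and is monotone in d. Hence the one-step operator F is monotone
   and discounting, d <= d' + c ==> F d <= F d' + gamma c (Blackwell's conditions). Starting from
   d_0 = 0 this yields 0 <= d_m <= d_n + gamma^n Rmax / (1 - gamma) for all m, n, so the iterates
   approach their supremum uniformly at that rate, and applying F to these bounds shows that the
   supremum is a fixed point. *)

lemma coupling_mass:
  assumes "L \<in> couplings P Q" and "is_distr P"
  shows "(\<Sum>i\<in>UNIV. \<Sum>j\<in>UNIV. L i j) = 1"
  using assms unfolding couplings_def is_distr_def by auto

lemma product_coupling:
  assumes "is_distr P" and "is_distr Q"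
  shows "(\<lambda>i j. P i * Q j) \<in> couplings P Q"
  using assms unfolding couplings_def is_distr_def
  by (auto simp: sum_distrib_left[symmetric] sum_distrib_right[symmetric])

lemma coupling_cost_shift:
  fixes d d' :: "'s::finite \<Rightarrow> 's \<Rightarrow> real"
  assumes L: "L \<in> couplings P Q" and P: "is_distr P" and le: "\<And>i j. d i j \<le> d' i j + c"
  shows "(\<Sum>i\<in>UNIV. \<Sum>j\<in>UNIV. L i j * d i j) \<le> (\<Sum>i\<in>UNIV. \<Sum>j\<in>UNIV. L i j * d' i j) + c"
proof -
  have L_nonneg: "0 \<le> L i j" for i j
    using L unfolding couplings_def by auto
  have "(\<Sum>i\<in>UNIV. \<Sum>j\<in>UNIV. L i j * d i j) \<le> (\<Sum>i\<in>UNIV. \<Sum>j\<in>UNIV. L i j * (d' i j + c))"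
    by (intro sum_mono mult_left_mono le L_nonneg)
  also have "\<dots> = (\<Sum>i\<in>UNIV. \<Sum>j\<in>UNIV. L i j * d' i j) + c * (\<Sum>i\<in>UNIV. \<Sum>j\<in>UNIV. L i j)"
    by (simp add: algebra_simps sum.distrib sum_distrib_left)
  finally show ?thesis
    using coupling_mass[OF L P] by simp
qed

lemma W1_shift:
  fixes P Q :: "'s::finite \<Rightarrow> real"
  assumes P: "is_distr P" and Q: "is_distr Q" and le: "\<And>i j. d i j \<le> d' i j + c"
  shows "W1 P Q d \<le> W1 P Q d' + c"
proof -
  let ?cost = "\<lambda>d L. \<Sum>i\<in>UNIV. \<Sum>j\<in>UNIV. L i j * d i j"
  define m where "m = Min (range (case_prod d))"
  have "m \<le> d i j" for i j
    unfolding m_def by (rule Min_le) auto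
  then have "?cost (\<lambda>_ _. 0) L \<le> ?cost d L + - m" if "L \<in> couplings P Q" for L
    by (intro coupling_cost_shift[OF that P]) simp
  then have bdd: "bdd_below (?cost d ` couplings P Q)"
    by (intro bdd_belowI2[of _ m]) simp
  have "W1 P Q d - c \<le> W1 P Q d'"
    unfolding W1_def
  proof (rule cINF_greatest)
    show "couplings P Q \<noteq> {}"
      using product_coupling[OF P Q] by blast
    fix L
    assume L: "L \<in> couplings P Q"
    have "(INF L\<in>couplings P Q. ?cost d L) \<le> ?cost d L"
      by (rule cINF_lower[OF bdd L])
    then show "(INF L\<in>couplings P Q. ?cost d L) - c \<le> ?cost d' L"
      using coupling_cost_shift[where d = d and d' = d' and c = c, OF L P le] by simp
  qed
  then show ?thesis
    by simp
qed

lemma W1_zero_cost: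
  assumes "is_distr P" and "is_distr Q"
  shows "W1 P Q (\<lambda>_ _. 0) = 0"
proof -
  have "(\<lambda>L. \<Sum>i\<in>UNIV. \<Sum>j\<in>UNIV. L i j * (0::real)) ` couplings P Q = {0}"
    using product_coupling[OF assms] by auto
  then show ?thesis
    unfolding W1_def by simp
qed

lemma Rmax_ge: "\<bar>R si a - R' sj a\<bar> \<le> Rmax R R'"
  unfolding Rmax_def
proof (rule Max_ge)
  have "{\<bar>R si a - R' sj a\<bar> | si sj a. True} = (\<lambda>(si, sj, a). \<bar>R si a - R' sj a\<bar>) ` UNIV"
    by (auto intro: image_eqI[of _ _ "(si, sj, a)" for si sj a])
  then show "finite {\<bar>R si a - R' sj a\<bar> | si sj a. True}"
    by simp
qed blast

lemma bisim_step_shift: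
  fixes P P' :: "'s::finite \<Rightarrow> 'a::finite \<Rightarrow> 's \<Rightarrow> real"
  assumes "0 \<le> \<gamma>" and P: "\<And>s a. is_distr (P s a)" and P': "\<And>s a. is_distr (P' s a)"
    and le: "\<And>i j. d i j \<le> d' i j + c"
  shows "bisim_step P P' R R' \<gamma> d si sj \<le> bisim_step P P' R R' \<gamma> d' si sj + \<gamma> * c"
proof -
  let ?value = "\<lambda>d a. \<bar>R si a - R' sj a\<bar> + \<gamma> * W1 (P si a) (P' sj a) d"
  have "?value d a \<le> ?value d' a + \<gamma> * c" for a
    using mult_left_mono[OF W1_shift[OF P P' le] \<open>0 \<le> \<gamma>\<close>] by (simp add: algebra_simps)
  also have "?value d' a \<le> Max (range (?value d'))" for a
    by (rule Max_ge) auto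
  finally show ?thesis
    unfolding bisim_step_def by (subst Max_le_iff) auto
qed

lemma bisim_step_zero_bounds:
  fixes P P' :: "'s::finite \<Rightarrow> 'a::finite \<Rightarrow> 's \<Rightarrow> real"
  assumes P: "\<And>s a. is_distr (P s a)" and P': "\<And>s a. is_distr (P' s a)"
  shows "0 \<le> bisim_step P P' R R' \<gamma> (\<lambda>_ _. 0) si sj"
    and "bisim_step P P' R R' \<gamma> (\<lambda>_ _. 0) si sj \<le> Rmax R R'"
proof -
  have step_zero: "bisim_step P P' R R' \<gamma> (\<lambda>_ _. 0) si sj = Max (range (\<lambda>a. \<bar>R si a - R' sj a\<bar>))"
    unfolding bisim_step_def using W1_zero_cost[OF P P'] by simp
  have "0 \<le> \<bar>R si undefined - R' sj undefined\<bar>"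
    by simp
  also have "\<dots> \<le> Max (range (\<lambda>a. \<bar>R si a - R' sj a\<bar>))"
    by (rule Max_ge) auto
  finally show "0 \<le> bisim_step P P' R R' \<gamma> (\<lambda>_ _. 0) si sj"
    unfolding step_zero .
  show "bisim_step P P' R R' \<gamma> (\<lambda>_ _. 0) si sj \<le> Rmax R R'"
    unfolding step_zero using Rmax_ge by (auto simp: Max_le_iff)
qed

lemma bisim_iter_eq_funpow:
  "bisim_iter P P' R R' \<gamma> n = (bisim_step P P' R R' \<gamma> ^^ n) (\<lambda>_ _. 0)"
  by (induction n) simp_all

locale blackwell_operator =
  fixes F :: "('i \<Rightarrow> 'j \<Rightarrow> real) \<Rightarrow> 'i \<Rightarrow> 'j \<Rightarrow> real" and \<gamma> B :: real
  assumes gamma_nonneg: "0 \<le> \<gamma>" and gamma_less_1: "\<gamma> < 1"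
    and shift: "(\<And>i j. x i j \<le> y i j + c) \<Longrightarrow> F x i j \<le> F y i j + \<gamma> * c"
    and F_zero_nonneg: "0 \<le> F (\<lambda>_ _. 0) i j"
    and F_zero_le: "F (\<lambda>_ _. 0) i j \<le> B"
begin

abbreviation iter :: "nat \<Rightarrow> 'i \<Rightarrow> 'j \<Rightarrow> real" where
  "iter n \<equiv> (F ^^ n) (\<lambda>_ _. 0)"

definition bound :: real where
  "bound = B / (1 - \<gamma>)"

definition limit :: "'i \<Rightarrow> 'j \<Rightarrow> real" where
  "limit i j = (SUP n. iter n i j)"

lemma mono: "(\<And>i j. x i j \<le> y i j) \<Longrightarrow> F x i j \<le> F y i j"
  using shift[of x y 0] by simp

lemma bound_nonneg: "0 \<le> bound"
proof -
  have "0 \<le> B"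
    using order_trans[OF F_zero_nonneg F_zero_le] .
  then show ?thesis
    unfolding bound_def using gamma_less_1 by simp
qed

lemma gamma_power_bound_nonneg: "0 \<le> \<gamma> ^ n * bound"
  using gamma_nonneg bound_nonneg by simp

lemma iter_nonneg: "0 \<le> iter n i j"
proof (induction n arbitrary: i j)
  case (Suc n)
  have "F (\<lambda>_ _. 0) i j \<le> F (iter n) i j"
    by (rule mono) (rule Suc.IH)
  then show ?case
    using F_zero_nonneg[of i j] by simp
qed simp

lemma iter_le_bound: "iter m i j \<le> bound"
proof (induction m arbitrary: i j)
  case 0
  show ?case
    using bound_nonneg by simp
next
  case (Suc m)
  have "F (iter m) i j \<le> F (\<lambda>_ _. 0) i j + \<gamma> * bound"
    by (rule shift) (simp add: Suc)
  also have "\<dots> \<le> B + \<gamma> * bound"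
    using F_zero_le by simp
  also have "\<dots> = bound"
    unfolding bound_def using gamma_less_1 by (simp add: field_simps)
  finally show ?case
    by simp
qed

lemma iter_le_iter: "iter m i j \<le> iter n i j + \<gamma> ^ n * bound"
proof (induction n arbitrary: m i j)
  case 0
  show ?case
    using iter_nonneg iter_le_bound by simp
next
  case (Suc n)
  show ?case
  proof (cases m)
    case 0
    then have "iter m i j = 0"
      by simp
    then show ?thesis
      using iter_nonneg[of "Suc n" i j] gamma_power_bound_nonneg[of "Suc n"] by linarith
  next
    case (Suc m')
    have "F (iter m') i j \<le> F (iter n) i j + \<gamma> * (\<gamma> ^ n * bound)"
      by (rule shift) (rule Suc.IH)
    then show ?thesis
      by (simp add: Suc mult.assoc)
  qed
qed

lemma iter_le_limit: "iter n i j \<le> limit i j"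
  unfolding limit_def
  by (rule cSUP_upper) (auto intro: bdd_aboveI2 iter_le_bound)

lemma limit_le_iter: "limit i j \<le> iter n i j + \<gamma> ^ n * bound"
  unfolding limit_def by (rule cSUP_least) (auto intro: iter_le_iter)

lemma gamma_power_tendsto_zero: "(\<lambda>n. \<gamma> ^ n * C) \<longlonglongrightarrow> 0"
  using gamma_nonneg gamma_less_1 by (intro tendsto_mult_left_zero LIMSEQ_power_zero) simp

lemma le_if_le_plus_gamma_power:
  assumes "\<And>n. x \<le> y + \<gamma> ^ n * C"
  shows "x \<le> y"
proof -
  have "(\<lambda>n. y + \<gamma> ^ n * C) \<longlonglongrightarrow> y"
    using tendsto_add[OF tendsto_const gamma_power_tendsto_zero] by simp
  then show ?thesis
    by (rule LIMSEQ_le_const) (use assms in auto)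
qed

lemma limit_fixed_point: "F limit i j = limit i j"
proof (rule order_antisym)
  show "F limit i j \<le> limit i j"
  proof (rule le_if_le_plus_gamma_power[where C = "\<gamma> * bound"])
    fix n
    have "F limit i j \<le> F (iter n) i j + \<gamma> * (\<gamma> ^ n * bound)"
      by (rule shift) (rule limit_le_iter)
    also have "F (iter n) i j \<le> limit i j"
      using iter_le_limit[of "Suc n"] by simp
    finally show "F limit i j \<le> limit i j + \<gamma> ^ n * (\<gamma> * bound)"
      by (simp add: mult_ac)
  qed
  show "limit i j \<le> F limit i j"
  proof (rule le_if_le_plus_gamma_power[where C = "\<gamma> * bound"])
    fix n
    have "F (iter n) i j \<le> F limit i j"
      by (rule mono) (rule iter_le_limit)
    then show "limit i j \<le> F limit i j + \<gamma> ^ n * (\<gamma> * bound)"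
      using limit_le_iter[of i j "Suc n"] by (simp add: mult_ac)
  qed
qed

lemma iter_converges_uniformly:
  assumes "0 < e"
  shows "\<exists>M. \<forall>n\<ge>M. \<forall>i j. \<bar>iter n i j - limit i j\<bar> < e"
proof -
  have "eventually (\<lambda>n. \<gamma> ^ n * bound < e) sequentially"
    using order_tendstoD(2)[OF gamma_power_tendsto_zero assms] .
  then obtain M where M: "\<forall>n\<ge>M. \<gamma> ^ n * bound < e"
    unfolding eventually_sequentially by blast
  have "\<bar>iter n i j - limit i j\<bar> \<le> \<gamma> ^ n * bound" for n i j
    using iter_le_limit[of n i j] limit_le_iter[of i j n] gamma_power_bound_nonneg[of n]
    unfolding abs_le_iff by linarith
  then show ?thesis
    using M by (blast intro: order_le_less_trans)
qed

end

lemma blackwell_operator_bisim_step: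
  fixes P P' :: "'s::finite \<Rightarrow> 'a::finite \<Rightarrow> 's \<Rightarrow> real"
  assumes "0 \<le> \<gamma>" and "\<gamma> < 1"
    and "\<And>s a. is_distr (P s a)" and "\<And>s a. is_distr (P' s a)"
  shows "blackwell_operator (bisim_step P P' R R' \<gamma>) \<gamma> (Rmax R R')"
proof
  show "0 \<le> \<gamma>" and "\<gamma> < 1"
    using assms by simp_all
  show "bisim_step P P' R R' \<gamma> x i j \<le> bisim_step P P' R R' \<gamma> y i j + \<gamma> * c"
    if "\<And>i j. x i j \<le> y i j + c" for x y c i j
    using assms that by (intro bisim_step_shift) simp_all
  show "0 \<le> bisim_step P P' R R' \<gamma> (\<lambda>_ _. 0) i j"
    and "bisim_step P P' R R' \<gamma> (\<lambda>_ _. 0) i j \<le> Rmax R R'" for i j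
    using assms by (simp_all add: bisim_step_zero_bounds)
qed

theorem theorem3:
  fixes P P' :: "'s::finite \<Rightarrow> 'a::finite \<Rightarrow> 's \<Rightarrow> real"
    and R R' :: "'s \<Rightarrow> 'a \<Rightarrow> real"
    and \<gamma> :: real
  assumes "0 < \<gamma>" and "\<gamma> < 1"
    and "\<And>s a. is_distr (P s a)"
    and "\<And>s a. is_distr (P' s a)"
  shows "\<exists>dbar :: 's \<Rightarrow> 's \<Rightarrow> real.
           (\<forall>si sj. 0 \<le> dbar si sj \<and> dbar si sj \<le> Rmax R R' / (1 - \<gamma>))
         \<and> (\<forall>e>0. \<exists>M. \<forall>n\<ge>M. \<forall>si sj. \<bar>bisim_iter P P' R R' \<gamma> n si sj - dbar si sj\<bar> < e)
         \<and> (\<forall>si sj. dbar si sj = bisim_step P P' R R' \<gamma> dbar si sj)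
         \<and> (\<forall>n si sj. dbar si sj - bisim_iter P P' R R' \<gamma> n si sj \<le> \<gamma> ^ n * Rmax R R' / (1 - \<gamma>))"
proof -
  interpret blackwell_operator "bisim_step P P' R R' \<gamma>" \<gamma> "Rmax R R'"
    using assms by (intro blackwell_operator_bisim_step) simp_all
  show ?thesis
  proof (intro exI[of _ limit] conjI allI impI)
    fix si sj n
    show "0 \<le> limit si sj"
      using iter_le_limit[of 0] by simp
    show "limit si sj \<le> Rmax R R' / (1 - \<gamma>)"
      using limit_le_iter[of _ _ 0] by (simp add: bound_def)
    show "limit si sj = bisim_step P P' R R' \<gamma> limit si sj"
      using limit_fixed_point by simp
    show "limit si sj - bisim_iter P P' R R' \<gamma> n si sj \<le> \<gamma> ^ n * Rmax R R' / (1 - \<gamma>)"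
      using limit_le_iter[of si sj n] by (simp add: bisim_iter_eq_funpow bound_def)
  qed (simp add: bisim_iter_eq_funpow iter_converges_uniformly)
qed

end
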